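(* Let $T\in\mathsf{S}^3(V^+)$ be positive (all coordinates strictly positive). Let $u\in V$ with $\|u\|=1$ satisfy $\langle T,u^{\otimes3}\rangle=\rho=\|T\|_\sigma$, and let $$\sigma_2=\min\{|\langle T,u\odot v\odot v\rangle|:\ \langle u,v\rangle=0,\ \|v\|=1\}.$$ If $\sigma_2\ge\rho/2$, then $T$ has a unique best nonnegative symmetric rank-one approximation.
   Context: $V$ is a real vector space of dimension $n$ with a fixed basis, taken orthonormal for the inner product $\langle\cdot,\cdot\rangle$; $V^+$ is the cone of vectors with nonnegative coordinates. $\mathsf{S}^3(V)$ is the space of symmetric 3-tensors and $\mathsf{S}^3(V^+)=\mathsf{S}^3(V)\cap(V^{\otimes3})^+$ the symmetric tensors with nonnegative coordinates. $u\odot v\odot w=\frac16\sum_{\tau}$ (sum of the six tensor products of $u,v,w$ in all orders). The inner product on tensors is the coordinate one and $\|\cdot\|$ the corresponding norm. $\|T\|_\sigma=\max\{|\langle T,u_1\otimes u_2\otimes u_3\rangle|:\|u_i\|=1\}$. A best nonnegative symmetric rank-one approximation of $T$ is a minimizer of $\|T-\lambda x^{\otimes3}\|$ over $\lambda\ge0$, $x\in V^+$ (uniqueness refers to the tensor $\lambda x^{\otimes 3}$). *)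

theory Defs
  imports "HOL-Analysis.Analysis"
begin

text \<open>V = real^'n (coordinates orthonormal), 3-tensors are functions 'n => 'n => 'n => real.\<close>

type_synonym 'n tensor3 = "'n \<Rightarrow> 'n \<Rightarrow> 'n \<Rightarrow> real"

definition tprod3 :: "real^'n \<Rightarrow> real^'n \<Rightarrow> real^'n \<Rightarrow> 'n tensor3" where
  "tprod3 u v w = (\<lambda>i j k. u$i * v$j * w$k)"

definition tpow3 :: "real^'n \<Rightarrow> 'n tensor3" where
  "tpow3 x = tprod3 x x x"

definition sym_prod3 :: "real^'n \<Rightarrow> real^'n \<Rightarrow> real^'n \<Rightarrow> 'n tensor3" where
  "sym_prod3 u v w = (\<lambda>i j k. (tprod3 u v w i j k + tprod3 u w v i j k + tprod3 v u w i j k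
      + tprod3 v w u i j k + tprod3 w u v i j k + tprod3 w v u i j k) / 6)"

definition tinner :: "'n::finite tensor3 \<Rightarrow> 'n tensor3 \<Rightarrow> real" where
  "tinner S T = (\<Sum>i\<in>UNIV. \<Sum>j\<in>UNIV. \<Sum>k\<in>UNIV. S i j k * T i j k)"

definition tnorm :: "'n::finite tensor3 \<Rightarrow> real" where
  "tnorm T = sqrt (tinner T T)"

definition symmetric3 :: "'n tensor3 \<Rightarrow> bool" where
  "symmetric3 T \<longleftrightarrow> (\<forall>i j k. T i j k = T j i k \<and> T i j k = T i k j)"

definition spectral_norm3 :: "'n::finite tensor3 \<Rightarrow> real" where
  "spectral_norm3 T = Sup {\<bar>tinner T (tprod3 u1 u2 u3)\<bar> | u1 u2 u3.
      norm u1 = 1 \<and> norm u2 = 1 \<and> norm u3 = 1}"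

definition nonneg_vec :: "real^'n \<Rightarrow> bool" where
  "nonneg_vec x \<longleftrightarrow> (\<forall>i. x$i \<ge> 0)"

definition best_nonneg_sym_rank1 :: "'n::finite tensor3 \<Rightarrow> 'n tensor3 \<Rightarrow> bool" where
  "best_nonneg_sym_rank1 T S \<longleftrightarrow>
     (\<exists>c x. c \<ge> 0 \<and> nonneg_vec x \<and> S = (\<lambda>i j k. c * tpow3 x i j k)) \<and>
     (\<forall>c' x'. c' \<ge> 0 \<and> nonneg_vec x' \<longrightarrow>
        tnorm (\<lambda>i j k. T i j k - S i j k) \<le> tnorm (\<lambda>i j k. T i j k - c' * tpow3 x' i j k))"

end

theory Submission
  imports Defs
begin

(* Let f(x) = <T, x(x)x(x)x> be the cubic form of T and rho = ||T||_sigma, so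
   that f(z) <= rho on the unit sphere, with equality at u.  Expanding the square gives,
   for every c >= 0,
     ||T - c x^3||^2 = ||T||^2 - rho^2 + (c |x|^3 - rho)^2 + 2 c (rho |x|^3 - f(x)),
   where both correction terms are nonnegative.  Hence rho u^3 is a best nonnegative
   rank-one approximation (u is nonnegative because T is positive), and every best one is
   rho y^3 for a nonnegative unit vector y maximising f, so that <u,y> >= 0.  Uniqueness
   thus reduces to: a unit maximiser y with <u,y> >= 0 equals u.  Writing y = c u + s v
   with v a unit vector orthogonal to u, f restricted to the circle through u and v is a
   binary cubic.  A rational parametrisation of the circle turns the maximality at u and
   at y into a real polynomial with two zero maxima; the vanishing of its derivative at
   both points forces 2 <T, u.v.v> = rho (1 - t^2) with 0 < t <= 1, hence
   |<T, u.v.v>| < rho/2, contradicting sigma_2 >= rho/2. *)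


(* The binary cubic k p^3 + 3 d p^2 q + 3 a p q^2 + b q^3 (the cubic form of a symmetric
   tensor restricted to a plane, in an orthonormal basis). *)
definition binary_cubic :: "real \<Rightarrow> real \<Rightarrow> real \<Rightarrow> real \<Rightarrow> real \<Rightarrow> real \<Rightarrow> real" where
  "binary_cubic k d a b p q = k * p^3 + 3 * d * p^2 * q + 3 * a * p * q^2 + b * q^3"

definition rcos :: "real \<Rightarrow> real" where "rcos t = (1 - t^2) / (1 + t^2)"
definition rsin :: "real \<Rightarrow> real" where "rsin t = 2 * t / (1 + t^2)"

(* The polynomial (1 + t^2)^3 (binary_cubic k d a b (rcos t) (rsin t) - k), cf. circle_excess_eq. *)
definition circle_excess :: "real \<Rightarrow> real \<Rightarrow> real \<Rightarrow> real \<Rightarrow> real \<Rightarrow> real" where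
  "circle_excess k d a b t = t * (6*d*(1-t^2)^2 + 12*a*t*(1-t^2) + 8*b*t^2 - k*(6*t + 2*t^5))"

lemma rcos_rsin_circle: "rcos t ^ 2 + rsin t ^ 2 = 1"
proof -
  have "0 < 1 + t^2" by (simp add: add_pos_nonneg)
  then show ?thesis unfolding rcos_def rsin_def by (simp add: power_divide field_simps) algebra
qed

lemma rcos_rsin_onto:
  assumes "c^2 + s^2 = 1" and "-1 < c"
  shows "rcos (s / (1 + c)) = c" and "rsin (s / (1 + c)) = s"
proof -
  have c1: "1 + c \<noteq> 0" using assms(2) by simp
  have den: "1 + (s / (1 + c))^2 = 2 / (1 + c)"
    using c1 assms(1) by (simp add: power_divide field_simps) algebra
  show "rcos (s / (1 + c)) = c"
    unfolding rcos_def den using c1 assms(1) by (simp add: power_divide field_simps) algebra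
  show "rsin (s / (1 + c)) = s"
    unfolding rsin_def den using c1 by (simp add: field_simps)
qed

lemma circle_excess_eq:
  "circle_excess k d a b t = (1 + t^2)^3 * (binary_cubic k d a b (rcos t) (rsin t) - k)"
proof -
  define D where "D = 1 + t^2"
  have "0 < D" unfolding D_def by (simp add: add_pos_nonneg)
  then have p: "D * rcos t = 1 - t^2" and q: "D * rsin t = 2 * t"
    unfolding rcos_def rsin_def D_def by simp_all
  have "D^3 * (binary_cubic k d a b (rcos t) (rsin t) - k)
      = k * (D * rcos t)^3 + 3 * d * (D * rcos t)^2 * (D * rsin t)
        + 3 * a * (D * rcos t) * (D * rsin t)^2 + b * (D * rsin t)^3 - k * D^3"
    unfolding binary_cubic_def by algebra
  also have "\<dots> = k * (1 - t^2)^3 + 3 * d * (1 - t^2)^2 * (2 * t)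
        + 3 * a * (1 - t^2) * (2 * t)^2 + b * (2 * t)^3 - k * D^3"
    by (simp only: p q)
  also have "\<dots> = circle_excess k d a b t"
    unfolding circle_excess_def D_def by algebra
  finally show ?thesis unfolding D_def ..
qed

lemma circle_excess_deriv:
  "(circle_excess k d a b has_real_derivative
     6*d*(1-t^2)^2 + 12*a*t*(1-t^2) + 8*b*t^2 - k*(6*t + 2*t^5)
     + t * (- 24*d*t*(1-t^2) + 12*a*(1 - 3*t^2) + 16*b*t - k*(6 + 10*t^4))) (at t)"
  unfolding circle_excess_def
  by (rule derivative_eq_intros refl | simp)+ (simp add: algebra_simps power2_eq_square power3_eq_cube)

lemma deriv_zero_at_max:
  fixes P :: "real \<Rightarrow> real"
  assumes "(P has_real_derivative D) (at x)" and "\<And>t. P t \<le> 0" and "P x = 0"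
  shows "D = 0"
  using DERIV_local_max[OF assms(1), of 1] assms(2,3) by simp

(* The one-variable heart of the argument: if a binary cubic attains its maximum k > 0 on
   the unit circle both at (1,0) and at a second point (c,s) with c \<ge> 0 < s, then its
   mixed coefficient a satisfies |a| < k/2.  Both maxima are zeros of the nonpositive
   polynomial circle_excess, at t = 0 and t0 = s/(1+c); the derivative at 0 gives d = 0, and
   circle_excess t0 = 0 together with its derivative at t0 give 2a = k (1 - t0^2). *)
lemma binary_cubic_second_max:
  assumes k: "0 < k"
    and max: "\<And>p q. p^2 + q^2 = 1 \<Longrightarrow> binary_cubic k d a b p q \<le> k"
    and cs: "c^2 + s^2 = 1" "0 \<le> c" "0 < s" and at: "binary_cubic k d a b c s = k"
  shows "\<bar>a\<bar> < k / 2"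
proof -
  have le: "circle_excess k d a b t \<le> 0" for t
    unfolding circle_excess_eq using max[OF rcos_rsin_circle, of t]
    by (intro mult_nonneg_nonpos) (simp_all add: add_nonneg_nonneg)
  define t0 where "t0 = s / (1 + c)"
  have "s^2 \<le> 1" using cs(1) zero_le_power2[of c] by linarith
  then have "s \<le> 1" using power2_le_imp_le[of s 1] by simp
  then have t0: "0 < t0" "t0 \<le> 1" unfolding t0_def using cs(2,3) by simp_all
  have "-1 < c" using cs(2) by simp
  then have P: "circle_excess k d a b t0 = 0"
    using rcos_rsin_onto[OF cs(1)] at by (simp add: circle_excess_eq t0_def)
  note crit = deriv_zero_at_max[OF circle_excess_deriv le]
  have d: "d = 0" using crit[of 0] by (simp add: circle_excess_def)
  have P0: "12*a*t0*(1-t0^2) + 8*b*t0^2 - k*(6*t0 + 2*t0^5) = 0"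
    using P d t0(1) by (simp add: circle_excess_def)
  have P1: "12*a*(1 - 3*t0^2) + 16*b*t0 - k*(6 + 10*t0^4) = 0"
    using crit[OF P] d P0 t0(1) by simp
  have "(1 + t0^2) * (2 * a - k * (1 - t0^2)) = 0"
    using P0 P1 t0(1) by algebra
  moreover have "0 < 1 + t0^2" by (simp add: add_pos_nonneg)
  ultimately have a: "2 * a = k * (1 - t0^2)" by simp
  have "0 < t0^2" "t0^2 \<le> 1" using t0 by (simp_all add: power_le_one)
  then have "0 \<le> k * (1 - t0^2)" "k * (1 - t0^2) < k"
    using k by (simp_all add: mult_pos_pos)
  then show ?thesis using a by linarith
qed


definition tri :: "'n::finite tensor3 \<Rightarrow> real^'n \<Rightarrow> real^'n \<Rightarrow> real^'n \<Rightarrow> real" where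
  "tri T x y z = (\<Sum>i\<in>UNIV. \<Sum>j\<in>UNIV. \<Sum>k\<in>UNIV. T i j k * (x$i * y$j * z$k))"

lemma tinner_tprod3: "tinner T (tprod3 x y z) = tri T x y z"
  by (simp add: tinner_def tprod3_def tri_def)

lemma tinner_tpow3: "tinner T (tpow3 x) = tri T x x x"
  by (simp add: tpow3_def tinner_tprod3)

lemma tri_add:
  "tri T (x + x') y z = tri T x y z + tri T x' y z"
  "tri T x (y + y') z = tri T x y z + tri T x y' z"
  "tri T x y (z + z') = tri T x y z + tri T x y z'"
  by (simp_all add: tri_def algebra_simps sum.distrib)

lemma tri_scale:
  "tri T (r *\<^sub>R x) y z = r * tri T x y z"
  "tri T x (r *\<^sub>R y) z = r * tri T x y z"
  "tri T x y (r *\<^sub>R z) = r * tri T x y z"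
  by (simp_all add: tri_def algebra_simps sum_distrib_left)

lemma tri_hom: "tri T (r *\<^sub>R x) (r *\<^sub>R x) (r *\<^sub>R x) = r^3 * tri T x x x"
  by (simp add: tri_scale power3_eq_cube)

lemma tri_swap12: assumes "symmetric3 T" shows "tri T x y z = tri T y x z"
proof -
  have "tri T x y z = (\<Sum>j\<in>UNIV. \<Sum>i\<in>UNIV. \<Sum>k\<in>UNIV. T i j k * (x$i * y$j * z$k))"
    unfolding tri_def by (rule sum.swap)
  also have "\<dots> = tri T y x z" unfolding tri_def
    using assms unfolding symmetric3_def by (intro sum.cong refl) (metis mult.commute mult.left_commute)
  finally show ?thesis .
qed

lemma tri_swap23: assumes "symmetric3 T" shows "tri T x y z = tri T x z y"
proof -
  have "tri T x y z = (\<Sum>i\<in>UNIV. \<Sum>k\<in>UNIV. \<Sum>j\<in>UNIV. T i j k * (x$i * y$j * z$k))"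
    unfolding tri_def by (intro sum.cong refl sum.swap)
  also have "\<dots> = tri T x z y" unfolding tri_def
    using assms unfolding symmetric3_def by (intro sum.cong refl) (metis mult.commute mult.left_commute)
  finally show ?thesis .
qed

lemma tinner_sym_prod3: assumes "symmetric3 T" shows "tinner T (sym_prod3 u v v) = tri T u v v"
proof -
  have "6 * tinner T (sym_prod3 u v v) = (\<Sum>i\<in>UNIV. \<Sum>j\<in>UNIV. \<Sum>k\<in>UNIV.
      T i j k * (u$i * v$j * v$k) + T i j k * (u$i * v$j * v$k) + T i j k * (v$i * u$j * v$k)
      + T i j k * (v$i * v$j * u$k) + T i j k * (v$i * u$j * v$k) + T i j k * (v$i * v$j * u$k))"
    unfolding tinner_def sum_distrib_left
    by (intro sum.cong refl) (simp add: sym_prod3_def tprod3_def algebra_simps)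
  also have "\<dots> = tri T u v v + tri T u v v + tri T v u v + tri T v v u + tri T v u v + tri T v v u"
    by (simp only: tri_def sum.distrib)
  also have "\<dots> = 6 * tri T u v v"
    using tri_swap12[OF assms, of v u v] tri_swap23[OF assms, of v u v] by simp
  finally show ?thesis by simp
qed

lemma tri_binary_cubic: assumes "symmetric3 T"
  shows "tri T (p *\<^sub>R u + q *\<^sub>R v) (p *\<^sub>R u + q *\<^sub>R v) (p *\<^sub>R u + q *\<^sub>R v)
    = binary_cubic (tri T u u u) (tri T u u v) (tri T u v v) (tri T v v v) p q"
  using tri_swap12[OF assms, of v u u] tri_swap23[OF assms, of u v u]
    tri_swap12[OF assms, of v u v] tri_swap23[OF assms, of v v u]
  by (simp add: binary_cubic_def tri_add tri_scale algebra_simps power2_eq_square power3_eq_cube)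

(* Coordinate expressions of |x|^2 and of the cube of a sum, for computing |x^3|^2 = |x|^6. *)
lemma norm_sq_sum: "(norm (x::real^'n))^2 = (\<Sum>i\<in>UNIV. x$i * x$i)"
  by (simp add: power2_norm_eq_inner inner_vec_def)

lemma cube_sum: "(\<Sum>i\<in>UNIV. \<Sum>j\<in>UNIV. \<Sum>k\<in>UNIV. (a i * a j * a k :: real)) = (\<Sum>i\<in>UNIV. a i)^3"
proof -
  have "(\<Sum>i\<in>UNIV. a i)^3 = (\<Sum>i\<in>UNIV. a i) * ((\<Sum>j\<in>UNIV. a j) * (\<Sum>k\<in>UNIV. a k))"
    by (simp add: power3_eq_cube)
  also have "\<dots> = (\<Sum>i\<in>UNIV. a i * (\<Sum>j\<in>UNIV. a j * (\<Sum>k\<in>UNIV. a k)))"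
    by (simp only: sum_distrib_right)
  also have "\<dots> = (\<Sum>i\<in>UNIV. \<Sum>j\<in>UNIV. \<Sum>k\<in>UNIV. a i * a j * a k)"
    by (simp only: sum_distrib_left mult.assoc)
  finally show ?thesis by simp
qed

lemma tinner_residual:
  "tinner (\<lambda>i j k. T i j k - c * tpow3 x i j k) (\<lambda>i j k. T i j k - c * tpow3 x i j k)
   = tinner T T - 2 * c * tri T x x x + c^2 * (norm x)^6"
proof -
  have "tinner (\<lambda>i j k. T i j k - c * tpow3 x i j k) (\<lambda>i j k. T i j k - c * tpow3 x i j k)
    = (\<Sum>i\<in>UNIV. \<Sum>j\<in>UNIV. \<Sum>k\<in>UNIV. T i j k * T i j k - 2 * c * (T i j k * (x$i * x$j * x$k))
        + c^2 * ((x$i * x$i) * (x$j * x$j) * (x$k * x$k)))"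
    unfolding tinner_def tpow3_def tprod3_def
    by (intro sum.cong refl) (simp add: algebra_simps power2_eq_square)
  also have "\<dots> = tinner T T - 2 * c * tri T x x x
      + c^2 * (\<Sum>i\<in>UNIV. \<Sum>j\<in>UNIV. \<Sum>k\<in>UNIV. (x$i * x$i) * (x$j * x$j) * (x$k * x$k))"
    by (simp add: tinner_def tri_def sum.distrib sum_subtractf sum_distrib_left)
  also have "(\<Sum>i\<in>UNIV. \<Sum>j\<in>UNIV. \<Sum>k\<in>UNIV. (x$i * x$i) * (x$j * x$j) * (x$k * x$k)) = (norm x)^6"
  proof -
    have "norm x ^ 6 = ((norm x)^2)^3" by (simp flip: power_mult)
    then show ?thesis using cube_sum[of "\<lambda>i. x$i * x$i"] norm_sq_sum[of x] by simp
  qed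
  finally show ?thesis .
qed

(* The same quantity, rearranged around a level rho: for c \<ge> 0 and f(x) \<le> rho |x|^3 both
   correction terms are nonnegative. *)
lemma tnorm_residual:
  "tnorm (\<lambda>i j k. T i j k - c * tpow3 x i j k)
   = sqrt (tinner T T - \<rho>^2 + ((c * norm x ^ 3 - \<rho>)^2 + 2 * c * (\<rho> * norm x ^ 3 - tri T x x x)))"
proof -
  have "tinner T T - 2 * c * tri T x x x + c^2 * (norm x)^6
      = tinner T T - \<rho>^2 + ((c * norm x ^ 3 - \<rho>)^2 + 2 * c * (\<rho> * norm x ^ 3 - tri T x x x))"
    by algebra
  then show ?thesis unfolding tnorm_def tinner_residual by simp
qed

(* A crude bound making the set in the definition of the spectral norm bounded. *)
lemma tri_le_sum_abs:
  assumes "norm a \<le> 1" "norm b \<le> 1" "norm c \<le> 1"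
  shows "\<bar>tri T a b c\<bar> \<le> (\<Sum>i\<in>UNIV. \<Sum>j\<in>UNIV. \<Sum>k\<in>UNIV. \<bar>T i j k\<bar>)"
proof -
  have "\<bar>tri T a b c\<bar> \<le> (\<Sum>i\<in>UNIV. \<Sum>j\<in>UNIV. \<Sum>k\<in>UNIV. \<bar>T i j k * (a$i * b$j * c$k)\<bar>)"
    unfolding tri_def by (rule order_trans[OF sum_abs] sum_mono order_trans[OF sum_abs] sum_mono sum_abs)+
  also have "\<dots> \<le> (\<Sum>i\<in>UNIV. \<Sum>j\<in>UNIV. \<Sum>k\<in>UNIV. \<bar>T i j k\<bar>)"
  proof (intro sum_mono)
    fix i j k
    have "\<bar>a$i\<bar> \<le> 1" "\<bar>b$j\<bar> \<le> 1" "\<bar>c$k\<bar> \<le> 1"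
      using assms component_le_norm_cart[of a i] component_le_norm_cart[of b j]
        component_le_norm_cart[of c k] by auto
    then have "\<bar>a$i * b$j * c$k\<bar> \<le> 1" by (simp add: abs_mult mult_le_one)
    then show "\<bar>T i j k * (a$i * b$j * c$k)\<bar> \<le> \<bar>T i j k\<bar>"
      by (simp add: abs_mult mult_left_le)
  qed
  finally show ?thesis .
qed

lemma abs_tri_le_spectral_norm3:
  assumes "norm y = 1"
  shows "\<bar>tri T y y y\<bar> \<le> spectral_norm3 T"
  unfolding spectral_norm3_def
proof (rule cSup_upper)
  show "\<bar>tri T y y y\<bar> \<in> {\<bar>tinner T (tprod3 u1 u2 u3)\<bar> | u1 u2 u3. norm u1 = 1 \<and> norm u2 = 1 \<and> norm u3 = 1}"
    using assms by (auto simp: tinner_tprod3)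
  show "bdd_above {\<bar>tinner T (tprod3 u1 u2 u3)\<bar> | u1 u2 u3. norm u1 = 1 \<and> norm u2 = 1 \<and> norm u3 = 1}"
    by (rule bdd_aboveI[where M="\<Sum>i\<in>UNIV. \<Sum>j\<in>UNIV. \<Sum>k\<in>UNIV. \<bar>T i j k\<bar>"])
       (auto simp: tinner_tprod3 intro!: tri_le_sum_abs)
qed

lemma tri_axis: "tri T (axis m 1) (axis m 1) (axis m 1) = T m m m"
proof -
  have "tri T (axis m 1) (axis m 1) (axis m 1) = (\<Sum>i\<in>UNIV. \<Sum>j\<in>UNIV. \<Sum>k\<in>UNIV.
      if k = m then (if j = m then (if i = m then T m m m else 0) else 0) else 0)"
    unfolding tri_def by (intro sum.cong refl) (simp add: axis_def)
  also have "\<dots> = T m m m" by simp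
  finally show ?thesis .
qed

lemma spectral_norm3_pos:
  assumes "\<forall>i j k. T i j k > 0"
  shows "0 < spectral_norm3 T"
proof -
  fix m :: 'a
  have "T m m m \<le> spectral_norm3 T"
    using abs_tri_le_spectral_norm3[of "axis m 1" T] by (simp add: tri_axis)
  then show ?thesis using assms by (meson less_le_trans)
qed

lemma tri_le_homogeneous:
  assumes bnd: "\<And>z. norm z = 1 \<Longrightarrow> tri T z z z \<le> \<rho>"
  shows "tri T x x x \<le> \<rho> * norm x ^ 3"
proof (cases "x = 0")
  case True then show ?thesis by (simp add: tri_def)
next
  case False
  define y where "y = (1 / norm x) *\<^sub>R x"
  have "norm y = 1" unfolding y_def using False by simp
  then have "norm x ^ 3 * tri T y y y \<le> norm x ^ 3 * \<rho>" using bnd by (simp add: mult_left_mono)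
  moreover have xy: "x = norm x *\<^sub>R y" unfolding y_def using False by simp
  have "tri T x x x = norm x ^ 3 * tri T y y y" by (subst xy, subst xy, subst xy) (rule tri_hom)
  ultimately show ?thesis by (simp add: mult.commute)
qed

lemma nonneg_triple_sum_zero:
  fixes D :: "'a::finite \<Rightarrow> 'a \<Rightarrow> 'a \<Rightarrow> real"
  assumes nn: "\<And>i j k. 0 \<le> D i j k" and le: "(\<Sum>i\<in>UNIV. \<Sum>j\<in>UNIV. \<Sum>k\<in>UNIV. D i j k) \<le> 0"
  shows "D i j k = 0"
proof -
  have n2: "0 \<le> (\<Sum>k\<in>UNIV. D i j k)" for i j using nn by (simp add: sum_nonneg)
  have n1: "0 \<le> (\<Sum>j\<in>UNIV. \<Sum>k\<in>UNIV. D i j k)" for i using n2 by (simp add: sum_nonneg)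
  have "(\<Sum>i\<in>UNIV. \<Sum>j\<in>UNIV. \<Sum>k\<in>UNIV. D i j k) = 0" using le n1 by (simp add: sum_nonneg antisym)
  then have "(\<Sum>j\<in>UNIV. \<Sum>k\<in>UNIV. D i j k) = 0" using n1 by (simp add: sum_nonneg_eq_0_iff)
  then have "(\<Sum>k\<in>UNIV. D i j k) = 0" using n2 by (simp add: sum_nonneg_eq_0_iff)
  then show ?thesis using nn by (simp add: sum_nonneg_eq_0_iff)
qed

(* A maximiser of the cubic form of a positive tensor on the unit sphere is nonnegative:
   replacing u by (|u_i|)_i does not decrease f, and since all T_ijk > 0 equality forces
   |u_k| = u_k for every k. *)
lemma positive_tensor_maximizer_nonneg:
  assumes Tpos: "\<forall>i j k. T i j k > 0" and nu: "norm u = 1"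
    and max: "\<And>z. norm z = 1 \<Longrightarrow> tri T z z z \<le> tri T u u u"
  shows "nonneg_vec u"
proof -
  define ua where "ua = (\<chi> i. \<bar>u$i\<bar>)"
  define D where "D = (\<lambda>i j k. T i j k * (\<bar>u$i\<bar> * \<bar>u$j\<bar> * \<bar>u$k\<bar>) - T i j k * (u$i * u$j * u$k))"
  have Dnn: "0 \<le> D i j k" for i j k
  proof -
    have "u$i * u$j * u$k \<le> \<bar>u$i\<bar> * \<bar>u$j\<bar> * \<bar>u$k\<bar>" by (metis abs_ge_self abs_mult)
    then show ?thesis unfolding D_def using Tpos by (simp add: mult_left_mono less_imp_le)
  qed
  have "(\<Sum>i\<in>UNIV. \<Sum>j\<in>UNIV. \<Sum>k\<in>UNIV. D i j k) = tri T ua ua ua - tri T u u u"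
    by (simp add: D_def tri_def ua_def sum_subtractf)
  also have "\<dots> \<le> 0" using max[of ua] nu by (simp add: ua_def norm_vec_def)
  finally have D0: "D i j k = 0" for i j k by (rule nonneg_triple_sum_zero[OF Dnn])
  have "u \<noteq> 0" using nu by auto
  then obtain i0 where i0: "u$i0 \<noteq> 0" by (auto simp: vec_eq_iff)
  have "0 \<le> u$k" for k
  proof -
    have "T i0 i0 k * (u$i0 * u$i0 * (\<bar>u$k\<bar> - u$k)) = 0"
      using D0[of i0 i0 k] unfolding D_def by (simp add: algebra_simps abs_mult_self)
    moreover have "T i0 i0 k \<noteq> 0" using Tpos by (metis less_irrefl)
    ultimately have "\<bar>u$k\<bar> - u$k = 0" using i0 by simp
    then show ?thesis by (metis abs_ge_zero eq_iff_diff_eq_0)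
  qed
  then show ?thesis by (simp add: nonneg_vec_def)
qed

lemma inner_nonneg_vec: "nonneg_vec x \<Longrightarrow> nonneg_vec y \<Longrightarrow> 0 \<le> inner x y"
  unfolding nonneg_vec_def inner_vec_def by (simp add: sum_nonneg)

context
  fixes T :: "'n::finite tensor3" and u :: "real^'n" and \<rho> :: real
  assumes bnd: "\<And>z. norm z = 1 \<Longrightarrow> tri T z z z \<le> \<rho>"
    and nu: "norm u = 1" and fu: "tri T u u u = \<rho>"
begin

lemma tnorm_residual_max: "tnorm (\<lambda>i j k. T i j k - \<rho> * tpow3 u i j k) = sqrt (tinner T T - \<rho>^2)"
  using tnorm_residual[of T \<rho> u \<rho>] nu fu by simp

lemma residual_corrections_nonneg:
  assumes "0 \<le> c"
  shows "0 \<le> 2 * c * (\<rho> * norm x ^ 3 - tri T x x x)"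
  using tri_le_homogeneous[OF bnd, of x] assms by simp

lemma best_rank1_exists:
  assumes "nonneg_vec u" and "0 \<le> \<rho>"
  shows "best_nonneg_sym_rank1 T (\<lambda>i j k. \<rho> * tpow3 u i j k)"
  unfolding best_nonneg_sym_rank1_def
proof (intro conjI allI impI)
  show "\<exists>c x. c \<ge> 0 \<and> nonneg_vec x \<and> (\<lambda>i j k. \<rho> * tpow3 u i j k) = (\<lambda>i j k. c * tpow3 x i j k)"
    using assms by (intro exI[of _ \<rho>] exI[of _ u]) simp
  fix c :: real and x :: "real^'n" assume "0 \<le> c \<and> nonneg_vec x"
  then show "tnorm (\<lambda>i j k. T i j k - \<rho> * tpow3 u i j k) \<le> tnorm (\<lambda>i j k. T i j k - c * tpow3 x i j k)"
    unfolding tnorm_residual_max tnorm_residual[of T c x \<rho>]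
    using residual_corrections_nonneg[of c x] zero_le_power2[of "c * norm x ^ 3 - \<rho>"]
    by (intro real_sqrt_le_mono) linarith
qed

(* Conversely, a best approximation makes both correction terms vanish, so it is rho y^3
   for a nonnegative unit maximiser y of the cubic form. *)
lemma best_rank1_is_maximizer:
  assumes unn: "nonneg_vec u" and rpos: "0 < \<rho>" and best: "best_nonneg_sym_rank1 T S"
  obtains y where "norm y = 1" "nonneg_vec y" "tri T y y y = \<rho>"
    and "S = (\<lambda>i j k. \<rho> * tpow3 y i j k)"
proof -
  obtain c x where cx: "0 \<le> c" "nonneg_vec x" and S: "S = (\<lambda>i j k. c * tpow3 x i j k)"
    using best unfolding best_nonneg_sym_rank1_def by blast
  define n where "n = norm x"
  have "tnorm (\<lambda>i j k. T i j k - S i j k) \<le> tnorm (\<lambda>i j k. T i j k - \<rho> * tpow3 u i j k)"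
    using best unn rpos unfolding best_nonneg_sym_rank1_def by (meson less_imp_le)
  then have "(c * n ^ 3 - \<rho>)^2 + 2 * c * (\<rho> * n ^ 3 - tri T x x x) \<le> 0"
    unfolding S tnorm_residual_max tnorm_residual[of T c x \<rho>] n_def by simp
  then have "(c * n ^ 3 - \<rho>)^2 = 0" and fx: "2 * c * (\<rho> * n ^ 3 - tri T x x x) = 0"
    using residual_corrections_nonneg[OF cx(1), of x] zero_le_power2[of "c * n ^ 3 - \<rho>"]
    unfolding n_def by linarith+
  then have cn: "c * n ^ 3 = \<rho>" by simp
  then have n: "0 < n" and "c \<noteq> 0" using rpos unfolding n_def by auto
  then have fx: "tri T x x x = \<rho> * n ^ 3" using fx by simp
  define y where "y = (1 / n) *\<^sub>R x"
  have xy: "x = n *\<^sub>R y" unfolding y_def using n by simp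
  show ?thesis
  proof
    show "norm y = 1" unfolding y_def using n n_def by simp
    show "nonneg_vec y" using cx(2) n unfolding y_def nonneg_vec_def by simp
    have "n ^ 3 * tri T y y y = n ^ 3 * \<rho>"
      using fx tri_hom[of T n y] unfolding xy by (simp add: mult.commute)
    then show "tri T y y y = \<rho>" using n by simp
    show "S = (\<lambda>i j k. \<rho> * tpow3 y i j k)"
      unfolding S xy cn[symmetric] by (simp add: tpow3_def tprod3_def power3_eq_cube algebra_simps)
  qed
qed

end

lemma norm_comb_sq:
  fixes u v :: "real^'n"
  assumes "norm u = 1" "norm v = 1" "inner u v = 0"
  shows "(norm (p *\<^sub>R u + q *\<^sub>R v))^2 = p^2 + q^2"
proof -
  have "inner u u = 1" "inner v v = 1" using assms by (simp_all add: power2_norm_eq_inner[symmetric])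
  then show ?thesis using assms(3)
    by (simp add: power2_norm_eq_inner inner_add_left inner_add_right inner_commute[of v u])
       (simp add: algebra_simps power2_eq_square)
qed

(* The key uniqueness statement: if u maximises the cubic form with value rho > 0 and
   |<T, u.v.v>| \<ge> rho/2 for every unit v orthogonal to u, then u is the only maximiser in
   the half-space <u, y> \<ge> 0.  Otherwise y = c u + s v with c \<ge> 0 < s and the binary cubic
   on the plane of u and v would have a second maximum, contradicting
   binary_cubic_second_max. *)
lemma unique_maximizer:
  assumes sym: "symmetric3 T" and nu: "norm u = 1" and fu: "tri T u u u = \<rho>" and rpos: "0 < \<rho>"
    and bnd: "\<And>z. norm z = 1 \<Longrightarrow> tri T z z z \<le> \<rho>"
    and gap: "\<And>v. inner u v = 0 \<Longrightarrow> norm v = 1 \<Longrightarrow> \<rho>/2 \<le> \<bar>tri T u v v\<bar>"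
    and ny: "norm y = 1" and fy: "tri T y y y = \<rho>" and c0: "0 \<le> inner u y"
  shows "y = u"
proof -
  define c where "c = inner u y"
  define w where "w = y - c *\<^sub>R u"
  have "inner u u = 1" using nu by (simp add: power2_norm_eq_inner[symmetric])
  then have uw: "inner u w = 0" unfolding w_def c_def by (simp add: inner_diff_right)
  show ?thesis
  proof (cases "w = 0")
    case True
    then have yc: "y = c *\<^sub>R u" unfolding w_def by simp
    then have "\<bar>c\<bar> = 1" using ny nu by simp
    moreover have "0 \<le> c" using c0 unfolding c_def .
    ultimately show ?thesis using yc by simp
  next
    case False
    define s where "s = norm w"
    define v where "v = (1 / s) *\<^sub>R w"
    have s: "0 < s" using False unfolding s_def by simp
    have nv: "norm v = 1" and uv: "inner u v = 0" unfolding v_def s_def using False uw by simp_all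
    have y: "y = c *\<^sub>R u + s *\<^sub>R v" unfolding v_def w_def using s by simp
    have on_plane: "tri T (p *\<^sub>R u + q *\<^sub>R v) (p *\<^sub>R u + q *\<^sub>R v) (p *\<^sub>R u + q *\<^sub>R v)
        = binary_cubic \<rho> (tri T u u v) (tri T u v v) (tri T v v v) p q" for p q
      using tri_binary_cubic[OF sym] fu by simp
    have cs: "c^2 + s^2 = 1" using norm_comb_sq[OF nu nv uv, of c s] ny y by simp
    have max: "binary_cubic \<rho> (tri T u u v) (tri T u v v) (tri T v v v) p q \<le> \<rho>"
      if "p^2 + q^2 = 1" for p q
    proof -
      have "norm (p *\<^sub>R u + q *\<^sub>R v) = 1"
        by (rule power2_eq_imp_eq) (use norm_comb_sq[OF nu nv uv, of p q] that in simp_all)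
      then show ?thesis using bnd on_plane by metis
    qed
    have at: "binary_cubic \<rho> (tri T u u v) (tri T u v v) (tri T v v v) c s = \<rho>"
      using on_plane[of c s] y fy by simp
    have "\<bar>tri T u v v\<bar> < \<rho> / 2"
      using binary_cubic_second_max[OF rpos max cs _ s at] c0 unfolding c_def by simp
    then show ?thesis using gap[OF uv nv] by simp
  qed
qed

theorem mainTheorem11:
  fixes T :: "'n::finite tensor3" and u :: "real^'n" and \<rho> \<sigma>\<^sub>2 :: real
  assumes "symmetric3 T"
    and "\<forall>i j k. T i j k > 0"
    and "norm u = 1"
    and "tinner T (tpow3 u) = \<rho>"
    and "\<rho> = spectral_norm3 T"
    and "\<sigma>\<^sub>2 = Inf {\<bar>tinner T (sym_prod3 u v v)\<bar> | v. inner u v = 0 \<and> norm v = 1}"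
    and "\<sigma>\<^sub>2 \<ge> \<rho> / 2"
  shows "\<exists>!S. best_nonneg_sym_rank1 T S"
proof -
  have fu: "tri T u u u = \<rho>" using assms(4) by (simp add: tinner_tpow3)
  have bnd: "tri T z z z \<le> \<rho>" if "norm z = 1" for z
    using abs_tri_le_spectral_norm3[OF that, of T] assms(5) by simp
  have rpos: "0 < \<rho>" using spectral_norm3_pos[OF assms(2)] assms(5) by simp
  have unn: "nonneg_vec u" using positive_tensor_maximizer_nonneg[OF assms(2,3)] bnd fu by simp
  have gap: "\<rho>/2 \<le> \<bar>tri T u v v\<bar>" if "inner u v = 0" "norm v = 1" for v
  proof -
    have "\<sigma>\<^sub>2 \<le> \<bar>tinner T (sym_prod3 u v v)\<bar>"
      unfolding assms(6) by (rule cInf_lower) (use that in \<open>auto intro!: bdd_belowI[where m=0]\<close>)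
    then show ?thesis using assms(7) tinner_sym_prod3[OF assms(1)] by simp
  qed
  show ?thesis
  proof (rule ex1I)
    show "best_nonneg_sym_rank1 T (\<lambda>i j k. \<rho> * tpow3 u i j k)"
      using best_rank1_exists[OF bnd assms(3) fu unn] rpos by simp
    fix S assume "best_nonneg_sym_rank1 T S"
    then obtain y where y: "norm y = 1" "nonneg_vec y" "tri T y y y = \<rho>"
      and S: "S = (\<lambda>i j k. \<rho> * tpow3 y i j k)"
      using best_rank1_is_maximizer[OF bnd assms(3) fu unn rpos] by blast
    have "y = u" using unique_maximizer[OF assms(1,3) fu rpos bnd gap y(1,3)]
      inner_nonneg_vec[OF unn y(2)] by blast
    then show "S = (\<lambda>i j k. \<rho> * tpow3 u i j k)" using S by simp
  qed
qed

end
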